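(* Let $(X,* )$ be an associative shelf, let $C_n=\mathbb{Z}X^{n+1}$ for $n\ge 0$ (and $C_n=0$ for $n<0$), and let $d_i:C_n\to C_{n-1}$, $0\le i\le n$, be given on basis elements by $$d_i(x_0,\dots,x_n)=\begin{cases}(x_0*x_1,x_2,\dots,x_{n-1},x_n*x_0) & i=0,\\ (x_n*x_0,x_1,\dots,x_{n-2},x_{n-1}*x_n) & i=n,\\ (x_0,\dots,x_{i-2},x_{i-1}*x_i,x_i*x_{i+1},x_{i+2},\dots,x_n) & 0<i<n\end{cases}$$ (for $n=1$: $d_0(x_0,x_1)=x_0*x_1*x_0$, $d_1(x_0,x_1)=x_1*x_0*x_1$). Define $\partial_n=\sum_{i=0}^n(-1)^i d_i:C_n\to C_{n-1}$. Then $(C_n,\partial_n)$ is a chain complex, i.e. $\partial_n\circ\partial_{n+1}=0$ for all $n$.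
   Context: A shelf is a set $X$ with a binary operation $*$ satisfying $(a*b)*c=(a*c)*(b*c)$ for all $a,b,c\in X$; an associative shelf is a shelf whose operation is associative. *)

theory Defs
  imports "HOL-Library.Poly_Mapping"
begin

definition shelf :: "('a \<Rightarrow> 'a \<Rightarrow> 'a) \<Rightarrow> bool" where
  "shelf f \<longleftrightarrow> (\<forall>a b c. f (f a b) c = f (f a c) (f b c))"

definition assoc_shelf :: "('a \<Rightarrow> 'a \<Rightarrow> 'a) \<Rightarrow> bool" where
  "assoc_shelf f \<longleftrightarrow> shelf f \<and> (\<forall>a b c. f (f a b) c = f a (f b c))"

text \<open>Basis elements of C_n are tuples (x_0,...,x_n), i.e. lists of length n+1.
  Face map d_i on a tuple of length n+1 (n = length xs - 1).\<close>
definition face :: "('a \<Rightarrow> 'a \<Rightarrow> 'a) \<Rightarrow> nat \<Rightarrow> 'a list \<Rightarrow> 'a list" where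
  "face f i xs = (let n = length xs - 1 in
     if n = 1 then
       (if i = 0 then [f (f (xs!0) (xs!1)) (xs!0)] else [f (f (xs!1) (xs!0)) (xs!1)])
     else if i = 0 then
       f (xs!0) (xs!1) # drop 2 (take n xs) @ [f (xs!n) (xs!0)]
     else if i = n then
       f (xs!n) (xs!0) # take (n - 2) (drop 1 xs) @ [f (xs!(n-1)) (xs!n)]
     else
       take (i - 1) xs @ [f (xs!(i-1)) (xs!i), f (xs!i) (xs!(i+1))] @ drop (i + 2) xs)"

definition chains :: "nat \<Rightarrow> ('a list \<Rightarrow>\<^sub>0 int) set" where
  "chains n = {c. \<forall>xs\<in>Poly_Mapping.keys c. length xs = Suc n}"

text \<open>Boundary on a basis element: \<partial>_n = \<Sum>_{i=0}^n (-1)^i d_i, and \<partial>_0 = 0 (C_{-1} = 0).\<close>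
definition bd_basis :: "('a \<Rightarrow> 'a \<Rightarrow> 'a) \<Rightarrow> 'a list \<Rightarrow> ('a list \<Rightarrow>\<^sub>0 int)" where
  "bd_basis f xs = (if length xs \<le> 1 then 0
     else (\<Sum>i\<in>{0..length xs - 1}. Poly_Mapping.single (face f i xs) ((-1) ^ i)))"

definition bd :: "('a \<Rightarrow> 'a \<Rightarrow> 'a) \<Rightarrow> ('a list \<Rightarrow>\<^sub>0 int) \<Rightarrow> ('a list \<Rightarrow>\<^sub>0 int)" where
  "bd f c = (\<Sum>xs\<in>Poly_Mapping.keys c. Poly_Mapping.map (\<lambda>k. Poly_Mapping.lookup c xs * k) (bd_basis f xs))"

end

theory Submission
  imports Defs
begin

text \<open>The face maps satisfy the semi-simplicial identities \<open>d\<^sub>j \<circ> d\<^sub>i\<^sub>+\<^sub>1 = d\<^sub>i \<circ> d\<^sub>j\<close>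
  for \<open>j \<le> i\<close>. On tuples of length at least four this is checked entry by entry, using
  associativity and the consequence \<open>x y y z = x y z\<close> of the shelf law; on triples the outer
  faces are given by the special formula for \<open>n = 1\<close> and the three identities are computed
  directly. As for any semi-simplicial object, the terms of \<open>\<partial> \<circ> \<partial>\<close> then cancel in pairs
  \<open>(i + 1, j) \<leftrightarrow> (j, i)\<close>.\<close>

lemma assoc_shelf_assoc: "assoc_shelf f \<Longrightarrow> f (f a b) c = f a (f b c)"
  by (simp add: assoc_shelf_def)

lemma assoc_shelf_absorb_repeat:
  assumes "assoc_shelf f"
  shows "f x (f y (f y z)) = f x (f y z)"
proof -
  have assoc: "f (f a b) c = f a (f b c)" for a b c
    using assms by (rule assoc_shelf_assoc)
  have shelf: "f a (f b c) = f a (f c (f b c))" for a b c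
    using assms unfolding assoc_shelf_def shelf_def by metis
  txt \<open>Writing products as words, the shelf law is \<open>a b c = a c b c\<close>, and
    \<open>x y y z = x y z y z = x y z z y z = x z y z = x y z\<close>.\<close>
  have "f x (f y (f y z)) = f x (f y (f z (f y z)))"
    using shelf[of "f x y" y z] by (simp add: assoc)
  also have "\<dots> = f x (f y (f z (f z (f y z))))"
    using shelf[of "f x y" "f z y" z] by (simp add: assoc)
  also have "\<dots> = f x (f z (f y z))"
    using shelf[of x z "f y z"] by (simp add: assoc)
  also have "\<dots> = f x (f y z)"
    using shelf[of x y z] by simp
  finally show ?thesis .
qed

lemma length_face:
  assumes "length xs = Suc m" "2 \<le> m" "i \<le> m"
  shows "length (face f i xs) = m"
  using assms by (auto simp: face_def Let_def)

lemma nth_face_first: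
  assumes "length xs = Suc (Suc (Suc q))" "k < Suc (Suc q)"
  shows "face f 0 xs ! k =
    (if k = 0 then f (xs!0) (xs!1) else if k = Suc q then f (xs!Suc (Suc q)) (xs!0) else xs!Suc k)"
  using assms by (auto simp: face_def nth_append nth_Cons split: nat.split)

lemma nth_face_last:
  assumes "length xs = Suc (Suc (Suc q))" "k < Suc (Suc q)"
  shows "face f (Suc (Suc q)) xs ! k =
    (if k = 0 then f (xs!Suc (Suc q)) (xs!0) else if k = Suc q then f (xs!Suc q) (xs!Suc (Suc q))
     else xs!k)"
  using assms by (auto simp: face_def nth_append nth_Cons split: nat.split)

lemma nth_face_inner:
  assumes "length xs = Suc (Suc (Suc q))" "k < Suc (Suc q)" "i < Suc q"
  shows "face f (Suc i) xs ! k =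
    (if k < i then xs!k else if k = i then f (xs!i) (xs!Suc i)
     else if k = Suc i then f (xs!Suc i) (xs!Suc (Suc i)) else xs!Suc k)"
  using assms by (auto simp: face_def nth_append nth_Cons split: nat.split
      intro!: arg_cong[where f="(!) xs"])

lemma face_face_triple:
  assumes "assoc_shelf f" "j \<le> i" "i < 2"
  shows "face f j (face f (Suc i) [a, b, c]) = face f i (face f j [a, b, c])"
proof -
  have "i = 0 \<and> j = 0 \<or> i = 1 \<and> j = 0 \<or> i = 1 \<and> j = 1"
    using assms by auto
  then show ?thesis
    by (elim disjE conjE) (simp_all add: face_def
        assoc_shelf_assoc[OF assms(1)] assoc_shelf_absorb_repeat[OF assms(1)])
qed

lemma face_face_long:
  assumes shelf: "assoc_shelf f" and len: "length xs = Suc (Suc (Suc (Suc p)))"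
    and "j \<le> i" "i < Suc (Suc (Suc p))"
  shows "face f j (face f (Suc i) xs) = face f i (face f j xs)"
proof (rule nth_equalityI)
  have len_i: "length (face f (Suc i) xs) = Suc (Suc (Suc p))"
    and len_j: "length (face f j xs) = Suc (Suc (Suc p))"
    using assms by (simp_all add: length_face)
  then show "length (face f j (face f (Suc i) xs)) = length (face f i (face f j xs))"
    using assms by (simp add: length_face)
  fix k assume "k < length (face f j (face f (Suc i) xs))"
  then have k: "k < Suc (Suc p)"
    using assms len_i by (simp add: length_face)
  note laws = assoc_shelf_assoc[OF shelf] assoc_shelf_absorb_repeat[OF shelf]
    and nths = nth_face_first nth_face_last nth_face_inner
  consider "i = Suc (Suc p)" "j = 0"
    | "i = Suc (Suc p)" "j = Suc (Suc p)"
    | j' where "i = Suc (Suc p)" "j = Suc j'" "j' < Suc p"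
    | "i = 0" "j = 0"
    | i' where "i = Suc i'" "i' < Suc p" "j = 0"
    | i' j' where "i = Suc i'" "i' < Suc p" "j = Suc j'" "j' \<le> i'"
    using assms by (cases i; cases j; force)
  then show "face f j (face f (Suc i) xs) ! k = face f i (face f j xs) ! k"
    by cases (use len len_i len_j k in \<open>simp_all add: nths laws\<close>)
qed

lemma face_face:
  assumes "assoc_shelf f" "length xs = Suc m" "2 \<le> m" "j \<le> i" "i < m"
  shows "face f j (face f (Suc i) xs) = face f i (face f j xs)"
proof (cases "m = 2")
  case True
  then obtain a b c where "xs = [a, b, c]"
    using assms(2) by (auto simp: numeral_2_eq_2 length_Suc_conv)
  then show ?thesis
    using face_face_triple[OF assms(1,4)] assms(5) True by simp
next
  case False
  then have "m = Suc (Suc (Suc (m - 3)))"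
    using assms(3) by simp
  then show ?thesis
    using face_face_long[OF assms(1), of xs "m - 3"] assms(2,4,5) by simp
qed

lemma sum_antisymmetric_pairs_eq_0:
  fixes G :: "nat \<times> nat \<Rightarrow> 'b::ab_group_add"
  assumes "\<And>i j. j \<le> i \<Longrightarrow> i < m \<Longrightarrow> G (j, i) = - G (Suc i, j)"
  shows "(\<Sum>p\<in>{..m} \<times> {..<m}. G p) = 0"
proof -
  define A where "A = {(i, j). j < i \<and> i \<le> m}"
  define B where "B = {(i, j). i \<le> j \<and> j < m}"
  have fin: "finite A" "finite B"
    by (rule finite_subset[of _ "{..m} \<times> {..m}"], auto simp: A_def B_def)+
  have "sum G B = (\<Sum>(i, j)\<in>B. - G (Suc j, i))"
    by (rule sum.cong) (auto simp: B_def assms)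
  also have "\<dots> = - (\<Sum>(i, j)\<in>B. G (Suc j, i))"
    by (simp add: sum_negf case_prod_unfold)
  also have "(\<Sum>(i, j)\<in>B. G (Suc j, i)) = sum G A"
    by (rule sum.reindex_bij_witness[of _ "\<lambda>(i, j). (j, i - 1)" "\<lambda>(i, j). (Suc j, i)"])
      (auto simp: A_def B_def)
  finally have "sum G B = - sum G A" .
  moreover have "{..m} \<times> {..<m} = A \<union> B" "A \<inter> B = {}"
    by (auto simp: A_def B_def)
  ultimately show ?thesis
    using fin by (simp add: sum.union_disjoint)
qed

lemma alternating_face_sum_eq_0:
  fixes d :: "nat \<Rightarrow> 'a \<Rightarrow> 'a"
  assumes "\<And>i j. j \<le> i \<Longrightarrow> i < m \<Longrightarrow> d j (d (Suc i) x) = d i (d j x)"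
  shows "(\<Sum>i\<le>m. \<Sum>j<m. frag_cmul ((-1) ^ (i + j)) (frag_of (d j (d i x)))) = 0"
proof -
  have "(\<Sum>i\<le>m. \<Sum>j<m. frag_cmul ((-1) ^ (i + j)) (frag_of (d j (d i x))))
      = (\<Sum>(i, j)\<in>{..m} \<times> {..<m}. frag_cmul ((-1) ^ (i + j)) (frag_of (d j (d i x))))"
    by (rule sum.cartesian_product)
  also have "\<dots> = 0"
    by (rule sum_antisymmetric_pairs_eq_0) (simp add: assms add.commute)
  finally show ?thesis .
qed

lemma bd_eq_frag_extend: "bd f c = frag_extend (bd_basis f) c"
  unfolding bd_def frag_extend_def
  by (rule sum.cong) (auto intro: poly_mapping_eqI simp: Poly_Mapping.map.rep_eq when_def)

lemma bd_basis_eq: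
  assumes "length xs = Suc (Suc n)"
  shows "bd_basis f xs = (\<Sum>i\<le>Suc n. frag_cmul ((-1) ^ i) (frag_of (face f i xs)))"
proof -
  have "frag_cmul c (frag_of ys) = Poly_Mapping.single ys c" for c and ys :: "'a list"
    by (rule poly_mapping_eqI) (simp add: lookup_single when_def)
  then show ?thesis
    using assms by (simp add: bd_basis_def atLeast0AtMost)
qed

lemma bd_basis_bd_basis:
  assumes "assoc_shelf f" "length xs = Suc (Suc n)"
  shows "frag_extend (bd_basis f) (bd_basis f xs) = 0"
proof -
  have "frag_extend (bd_basis f) (bd_basis f xs)
      = (\<Sum>i\<le>Suc n. frag_cmul ((-1) ^ i) (bd_basis f (face f i xs)))"
    by (simp add: bd_basis_eq[OF assms(2)] frag_extend_sum frag_extend_cmul del: sum.atMost_Suc)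
  also have "\<dots> = 0"
  proof (cases n)
    case 0
    then have "bd_basis f (face f i xs) = 0" for i
      using assms(2) by (simp add: bd_basis_def face_def)
    then show ?thesis
      by simp
  next
    case (Suc n')
    have "bd_basis f (face f i xs)
        = (\<Sum>j<Suc n. frag_cmul ((-1) ^ j) (frag_of (face f j (face f i xs))))" if "i \<le> Suc n" for i
      using assms(2) that Suc
      by (simp add: bd_basis_eq length_face lessThan_Suc_atMost del: sum.atMost_Suc)
    then have "(\<Sum>i\<le>Suc n. frag_cmul ((-1) ^ i) (bd_basis f (face f i xs)))
        = (\<Sum>i\<le>Suc n. \<Sum>j<Suc n. frag_cmul ((-1) ^ (i + j)) (frag_of (face f j (face f i xs))))"
      by (intro sum.cong) (simp_all add: frag_cmul_sum power_add del: sum.lessThan_Suc)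
    also have "\<dots> = 0"
      using Suc assms by (intro alternating_face_sum_eq_0 face_face) auto
    finally show ?thesis .
  qed
  finally show ?thesis .
qed

theorem theorem1p4:
  fixes f :: "'a \<Rightarrow> 'a \<Rightarrow> 'a"
  assumes "assoc_shelf f"
  shows "\<forall>n. \<forall>c\<in>chains (Suc n). bd f (bd f c) = 0"
proof (intro allI ballI)
  fix n and c :: "'a list \<Rightarrow>\<^sub>0 int"
  assume "c \<in> chains (Suc n)"
  then have "Poly_Mapping.keys c \<subseteq> {xs. length xs = Suc (Suc n)}"
    by (auto simp: chains_def)
  then have "frag_extend (bd_basis f) (frag_extend (bd_basis f) c) = 0"
    by (induction c rule: frag_induction)
      (simp_all add: bd_basis_bd_basis[OF assms] frag_extend_diff)
  then show "bd f (bd f c) = 0"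
    by (simp add: bd_eq_frag_extend)
qed

end
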